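(* $\widetilde{\mathbb{R}}_{sm}$ is an $f$-ring: it is an $l$-ring (with the order $\le$, $\vee=\max$, $\wedge=\min$) and for all $r,s,t\in\widetilde{\mathbb{R}}_{sm}$ with $t\ge0$ one has $(r\wedge s)t=rt\wedge st$.
   Context: Let $I=(0,1]$. $\widetilde{\mathbb{R}}_{sm}=\mathcal{E}_{M,sm}/\mathcal{N}_{sm}$ where $\mathcal{E}_{M,sm}$ is the set of smooth $(r_\varepsilon)_{\varepsilon\in I}\in\mathbb{R}^I$ with $|r_\varepsilon|=O(\varepsilon^{-N})$ for some $N$, and $\mathcal{N}_{sm}$ those smooth nets with $|r_\varepsilon|=O(\varepsilon^m)$ for all $m$. Similarly $\widetilde{\mathbb{R}}_{co}$ is defined with continuous nets; the natural map $\tau_{sm}:\widetilde{\mathbb{R}}_{sm}\to\widetilde{\mathbb{R}}_{co}$ is a ring isomorphism. $r\le s$ means there are representatives with $r_\varepsilon\le s_\varepsilon$ for all $\varepsilon$. $r\wedge s=\min(r,s)=\tau_{sm}^{-1}([(\min(r_\varepsilon,s_\varepsilon))_\varepsilon])$ and $r\vee s=\max(r,s)=\tau_{sm}^{-1}([(\max(r_\varepsilon,s_\varepsilon))_\varepsilon])$. *)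

theory Defs
  imports "HOL-Analysis.Analysis" "HOL-Library.Landau_Symbols" "HOL-Algebra.Ring"
begin

text \<open>Nets are functions real \<Rightarrow> real; only their values on the index set I = (0,1] matter.\<close>

definition I_set :: "real set" where
  "I_set = {0<..1}"

definition smooth_net :: "(real \<Rightarrow> real) \<Rightarrow> bool" where
  "smooth_net r \<longleftrightarrow> (\<exists>D :: nat \<Rightarrow> real \<Rightarrow> real.
      (\<forall>t\<in>I_set. D 0 t = r t) \<and>
      (\<forall>k. \<forall>t\<in>I_set. (D k has_real_derivative D (Suc k) t) (at t within I_set)))"

definition moderate_net :: "(real \<Rightarrow> real) \<Rightarrow> bool" where
  "moderate_net r \<longleftrightarrow> (\<exists>N::nat. r \<in> O[at_right 0](\<lambda>e. inverse (e ^ N)))"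

definition negligible_net :: "(real \<Rightarrow> real) \<Rightarrow> bool" where
  "negligible_net r \<longleftrightarrow> (\<forall>m::nat. r \<in> O[at_right 0](\<lambda>e. e ^ m))"

definition E_sm :: "(real \<Rightarrow> real) set" where
  "E_sm = {r. smooth_net r \<and> moderate_net r}"

definition N_sm :: "(real \<Rightarrow> real) set" where
  "N_sm = {r. smooth_net r \<and> negligible_net r}"

definition E_co :: "(real \<Rightarrow> real) set" where
  "E_co = {r. continuous_on I_set r \<and> moderate_net r}"

definition N_co :: "(real \<Rightarrow> real) set" where
  "N_co = {r. continuous_on I_set r \<and> negligible_net r}"

definition rel_sm :: "((real \<Rightarrow> real) \<times> (real \<Rightarrow> real)) set" where
  "rel_sm = {(r, s). r \<in> E_sm \<and> s \<in> E_sm \<and> (\<lambda>e. r e - s e) \<in> N_sm}"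

definition rel_co :: "((real \<Rightarrow> real) \<times> (real \<Rightarrow> real)) set" where
  "rel_co = {(r, s). r \<in> E_co \<and> s \<in> E_co \<and> (\<lambda>e. r e - s e) \<in> N_co}"

definition Rsm :: "(real \<Rightarrow> real) set set" where
  "Rsm = E_sm // rel_sm"

definition Rco :: "(real \<Rightarrow> real) set set" where
  "Rco = E_co // rel_co"

definition cls_sm :: "(real \<Rightarrow> real) \<Rightarrow> (real \<Rightarrow> real) set" where
  "cls_sm r = rel_sm `` {r}"

definition cls_co :: "(real \<Rightarrow> real) \<Rightarrow> (real \<Rightarrow> real) set" where
  "cls_co r = rel_co `` {r}"

definition add_sm :: "(real \<Rightarrow> real) set \<Rightarrow> (real \<Rightarrow> real) set \<Rightarrow> (real \<Rightarrow> real) set" where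
  "add_sm X Y = (\<Union>r\<in>X. \<Union>s\<in>Y. cls_sm (\<lambda>e. r e + s e))"

definition mult_sm :: "(real \<Rightarrow> real) set \<Rightarrow> (real \<Rightarrow> real) set \<Rightarrow> (real \<Rightarrow> real) set" where
  "mult_sm X Y = (\<Union>r\<in>X. \<Union>s\<in>Y. cls_sm (\<lambda>e. r e * s e))"

definition Rsm_ring :: "(real \<Rightarrow> real) set ring" where
  "Rsm_ring = \<lparr>carrier = Rsm, mult = mult_sm, one = cls_sm (\<lambda>e. 1),
               zero = cls_sm (\<lambda>e. 0), add = add_sm\<rparr>"

text \<open>The natural map tau_sm : Rsm \<rightarrow> Rco, [r]_sm \<mapsto> [r]_co.\<close>
definition tau_sm :: "(real \<Rightarrow> real) set \<Rightarrow> (real \<Rightarrow> real) set" where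
  "tau_sm X = rel_co `` X"

definition le_sm :: "(real \<Rightarrow> real) set \<Rightarrow> (real \<Rightarrow> real) set \<Rightarrow> bool" where
  "le_sm X Y \<longleftrightarrow> (\<exists>r\<in>X. \<exists>s\<in>Y. \<forall>e\<in>I_set. r e \<le> s e)"

text \<open>min / max: tau_sm^{-1} of the class of the pointwise min / max of representatives.\<close>
definition min_sm :: "(real \<Rightarrow> real) set \<Rightarrow> (real \<Rightarrow> real) set \<Rightarrow> (real \<Rightarrow> real) set" where
  "min_sm X Y = (THE Z. Z \<in> Rsm \<and>
      (\<exists>r\<in>X. \<exists>s\<in>Y. tau_sm Z = cls_co (\<lambda>e. min (r e) (s e))))"

definition max_sm :: "(real \<Rightarrow> real) set \<Rightarrow> (real \<Rightarrow> real) set \<Rightarrow> (real \<Rightarrow> real) set" where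
  "max_sm X Y = (THE Z. Z \<in> Rsm \<and>
      (\<exists>r\<in>X. \<exists>s\<in>Y. tau_sm Z = cls_co (\<lambda>e. max (r e) (s e))))"

definition l_ring :: "'a ring \<Rightarrow> ('a \<Rightarrow> 'a \<Rightarrow> bool) \<Rightarrow> ('a \<Rightarrow> 'a \<Rightarrow> 'a) \<Rightarrow> ('a \<Rightarrow> 'a \<Rightarrow> 'a) \<Rightarrow> bool" where
  "l_ring R lq mn mx \<longleftrightarrow>
     ring R \<and>
     (\<forall>x\<in>carrier R. lq x x) \<and>
     (\<forall>x\<in>carrier R. \<forall>y\<in>carrier R. lq x y \<and> lq y x \<longrightarrow> x = y) \<and>
     (\<forall>x\<in>carrier R. \<forall>y\<in>carrier R. \<forall>z\<in>carrier R. lq x y \<and> lq y z \<longrightarrow> lq x z) \<and>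
     (\<forall>x\<in>carrier R. \<forall>y\<in>carrier R. \<forall>z\<in>carrier R. lq x y \<longrightarrow> lq (x \<oplus>\<^bsub>R\<^esub> z) (y \<oplus>\<^bsub>R\<^esub> z)) \<and>
     (\<forall>x\<in>carrier R. \<forall>y\<in>carrier R. lq \<zero>\<^bsub>R\<^esub> x \<and> lq \<zero>\<^bsub>R\<^esub> y \<longrightarrow> lq \<zero>\<^bsub>R\<^esub> (x \<otimes>\<^bsub>R\<^esub> y)) \<and>
     (\<forall>x\<in>carrier R. \<forall>y\<in>carrier R.
        mn x y \<in> carrier R \<and> lq (mn x y) x \<and> lq (mn x y) y \<and>
        (\<forall>z\<in>carrier R. lq z x \<and> lq z y \<longrightarrow> lq z (mn x y))) \<and>
     (\<forall>x\<in>carrier R. \<forall>y\<in>carrier R.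
        mx x y \<in> carrier R \<and> lq x (mx x y) \<and> lq y (mx x y) \<and>
        (\<forall>z\<in>carrier R. lq x z \<and> lq y z \<longrightarrow> lq (mx x y) z))"

definition f_ring :: "'a ring \<Rightarrow> ('a \<Rightarrow> 'a \<Rightarrow> bool) \<Rightarrow> ('a \<Rightarrow> 'a \<Rightarrow> 'a) \<Rightarrow> ('a \<Rightarrow> 'a \<Rightarrow> 'a) \<Rightarrow> bool" where
  "f_ring R lq mn mx \<longleftrightarrow> l_ring R lq mn mx \<and>
     (\<forall>r\<in>carrier R. \<forall>s\<in>carrier R. \<forall>t\<in>carrier R. lq \<zero>\<^bsub>R\<^esub> t \<longrightarrow>
        mn r s \<otimes>\<^bsub>R\<^esub> t = mn (r \<otimes>\<^bsub>R\<^esub> t) (s \<otimes>\<^bsub>R\<^esub> t))"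

end

theory Submission
  imports Defs
begin

text \<open>The pointwise minimum and maximum of smooth nets are only continuous, which is why min and
  max are defined through the isomorphism with the continuous quotient. They are nevertheless
  represented by smooth nets: the flat function exp (-1/e) is smooth, positive and negligible, and
  (r + s - sqrt ((r - s)^2 + exp (-1/e)^2)) / 2 is a smooth net within exp (-1/e) of min r s.
  Since the isomorphism is injective, this net represents min of the classes, and the lattice and
  f-ring laws then hold pointwise for representatives up to negligible errors.\<close>

section \<open>Smooth nets\<close>

lemma smooth_net_coinduct:
  assumes "P f"
    and step: "\<And>g. P g \<Longrightarrow> \<exists>g'. P g' \<and> (\<forall>t\<in>I_set. (g has_real_derivative g' t) (at t within I_set))"
  shows "smooth_net f"
proof -
  define next_deriv where
    "next_deriv g = (SOME g'. P g' \<and> (\<forall>t\<in>I_set. (g has_real_derivative g' t) (at t within I_set)))" for g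
  have next_deriv: "P (next_deriv g) \<and> (\<forall>t\<in>I_set. (g has_real_derivative next_deriv g t) (at t within I_set))"
    if "P g" for g
    unfolding next_deriv_def using someI_ex[OF step[OF that]] .
  define D where "D k = (next_deriv ^^ k) f" for k
  have "P (D k)" for k
    by (induction k) (use assms(1) next_deriv in \<open>simp_all add: D_def\<close>)
  then show ?thesis
    unfolding smooth_net_def using next_deriv by (intro exI[of _ D]) (simp add: D_def)
qed

lemma smooth_net_has_derivative:
  assumes "smooth_net f"
  obtains g where "smooth_net g" "\<And>t. t \<in> I_set \<Longrightarrow> (f has_real_derivative g t) (at t within I_set)"
proof -
  obtain D :: "nat \<Rightarrow> real \<Rightarrow> real" where D0: "\<forall>t\<in>I_set. D 0 t = f t"
    and DS: "\<forall>k. \<forall>t\<in>I_set. (D k has_real_derivative D (Suc k) t) (at t within I_set)"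
    using assms unfolding smooth_net_def by blast
  have "smooth_net (D 1)"
    unfolding smooth_net_def using DS by (intro exI[of _ "\<lambda>k. D (Suc k)"]) auto
  moreover have "(f has_real_derivative D 1 t) (at t within I_set)" if "t \<in> I_set" for t
  proof -
    have "(D 0 has_real_derivative D 1 t) (at t within I_set)" using DS that by simp
    then show ?thesis
      by (rule has_field_derivative_transform_within[OF _ zero_less_one that]) (use D0 in simp)
  qed
  ultimately show ?thesis using that by blast
qed

text \<open>Closed under differentiation, hence consisting of smooth nets by coinduction; this avoids
  computing higher derivatives of products and compositions.\<close>
inductive_set smooth_closure :: "(real \<Rightarrow> real) set" where
  smooth: "smooth_net f \<Longrightarrow> f \<in> smooth_closure"
| add: "f \<in> smooth_closure \<Longrightarrow> g \<in> smooth_closure \<Longrightarrow> (\<lambda>e. f e + g e) \<in> smooth_closure"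
| mult: "f \<in> smooth_closure \<Longrightarrow> g \<in> smooth_closure \<Longrightarrow> (\<lambda>e. f e * g e) \<in> smooth_closure"
| exp: "f \<in> smooth_closure \<Longrightarrow> (\<lambda>e. exp (f e)) \<in> smooth_closure"
| inverse: "f \<in> smooth_closure \<Longrightarrow> (\<forall>t\<in>I_set. f t \<noteq> 0) \<Longrightarrow> (\<lambda>e. inverse (f e)) \<in> smooth_closure"
| sqrt: "f \<in> smooth_closure \<Longrightarrow> (\<forall>t\<in>I_set. 0 < f t) \<Longrightarrow> (\<lambda>e. sqrt (f e)) \<in> smooth_closure"

lemma smooth_closure_const: "(\<lambda>_. c) \<in> smooth_closure"
proof (rule smooth_closure.smooth, rule smooth_net_coinduct[where P = "\<lambda>g. \<exists>c. g = (\<lambda>_. c)"])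
  show "\<exists>g'. (\<exists>c. g' = (\<lambda>_. c)) \<and> (\<forall>t\<in>I_set. (g has_real_derivative g' t) (at t within I_set))"
    if "\<exists>c. g = (\<lambda>_. c)" for g
    using that by (auto intro!: exI[of _ "\<lambda>_. 0"])
qed blast

lemma smooth_closure_has_derivative:
  assumes "f \<in> smooth_closure"
  shows "\<exists>f'\<in>smooth_closure. \<forall>t\<in>I_set. (f has_real_derivative f' t) (at t within I_set)"
  using assms
proof (induction rule: smooth_closure.induct)
  case (smooth f)
  then show ?case
    by (metis smooth_net_has_derivative smooth_closure.smooth)
next
  case (add f g)
  then obtain f' g' where "f' \<in> smooth_closure" "g' \<in> smooth_closure"
    "\<forall>t\<in>I_set. (f has_real_derivative f' t) (at t within I_set)"
    "\<forall>t\<in>I_set. (g has_real_derivative g' t) (at t within I_set)" by blast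
  then show ?case
    by (intro bexI[of _ "\<lambda>e. f' e + g' e"]) (auto intro: DERIV_add smooth_closure.add)
next
  case (mult f g)
  then obtain f' g' where "f' \<in> smooth_closure" "g' \<in> smooth_closure"
    "\<forall>t\<in>I_set. (f has_real_derivative f' t) (at t within I_set)"
    "\<forall>t\<in>I_set. (g has_real_derivative g' t) (at t within I_set)" by blast
  with mult.hyps show ?case
    by (intro bexI[of _ "\<lambda>e. f' e * g e + g' e * f e"])
       (auto intro: DERIV_mult smooth_closure.add smooth_closure.mult)
next
  case (exp f)
  then obtain f' where "f' \<in> smooth_closure"
    "\<forall>t\<in>I_set. (f has_real_derivative f' t) (at t within I_set)" by blast
  with exp.hyps show ?case
    by (intro bexI[of _ "\<lambda>e. exp (f e) * f' e"])
       (auto intro: DERIV_chain2[OF DERIV_exp] smooth_closure.mult smooth_closure.exp)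
next
  case (inverse f)
  then obtain f' where "f' \<in> smooth_closure"
    "\<forall>t\<in>I_set. (f has_real_derivative f' t) (at t within I_set)" by blast
  moreover have "(\<lambda>e. - 1 * (f' e * (inverse (f e) * inverse (f e)))) \<in> smooth_closure"
    using inverse.hyps \<open>f' \<in> smooth_closure\<close>
    by (intro smooth_closure.mult smooth_closure_const smooth_closure.inverse) auto
  ultimately show ?case using inverse.hyps
    by (intro bexI[of _ "\<lambda>e. - 1 * (f' e * (inverse (f e) * inverse (f e)))"])
       (auto intro!: DERIV_cong[OF DERIV_inverse_fun] simp: power2_eq_square)
next
  case (sqrt f)
  then obtain f' where "f' \<in> smooth_closure"
    "\<forall>t\<in>I_set. (f has_real_derivative f' t) (at t within I_set)" by blast
  moreover have "(\<lambda>e. inverse 2 * (f' e * inverse (sqrt (f e)))) \<in> smooth_closure"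
    using sqrt.hyps \<open>f' \<in> smooth_closure\<close>
    by (intro smooth_closure.mult smooth_closure_const smooth_closure.inverse smooth_closure.sqrt) auto
  ultimately show ?case using sqrt.hyps
    by (intro bexI[of _ "\<lambda>e. inverse 2 * (f' e * inverse (sqrt (f e)))"])
       (auto intro!: DERIV_cong[OF DERIV_chain2[OF DERIV_real_sqrt]] simp: field_simps)
qed

lemma smooth_closure_smooth: "f \<in> smooth_closure \<Longrightarrow> smooth_net f"
  by (rule smooth_net_coinduct[where P = "\<lambda>g. g \<in> smooth_closure"])
     (use smooth_closure_has_derivative in blast)+

lemma smooth_net_const: "smooth_net (\<lambda>_. c)"
  by (rule smooth_closure_smooth[OF smooth_closure_const])

lemma smooth_net_add: "smooth_net f \<Longrightarrow> smooth_net g \<Longrightarrow> smooth_net (\<lambda>e. f e + g e)"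
  by (rule smooth_closure_smooth, intro smooth_closure.add smooth_closure.smooth)

lemma smooth_net_mult: "smooth_net f \<Longrightarrow> smooth_net g \<Longrightarrow> smooth_net (\<lambda>e. f e * g e)"
  by (rule smooth_closure_smooth, intro smooth_closure.mult smooth_closure.smooth)

lemma smooth_net_uminus: "smooth_net f \<Longrightarrow> smooth_net (\<lambda>e. - f e)"
  using smooth_net_mult[OF smooth_net_const, of f "- 1"] by simp

lemma smooth_net_diff: "smooth_net f \<Longrightarrow> smooth_net g \<Longrightarrow> smooth_net (\<lambda>e. f e - g e)"
  using smooth_net_add[OF _ smooth_net_uminus, of f g] by simp

lemma smooth_net_ident: "smooth_net (\<lambda>e. e)"
proof (rule smooth_net_coinduct[where P = "\<lambda>g. \<exists>a b. g = (\<lambda>e. a * e + b)"])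
  fix g :: "real \<Rightarrow> real" assume "\<exists>a b. g = (\<lambda>e. a * e + b)"
  then obtain a b where g: "g = (\<lambda>e. a * e + b)" by blast
  have "(g has_real_derivative a * 1 + 0) (at t within I_set)" for t
    unfolding g by (intro DERIV_add DERIV_cmult DERIV_ident DERIV_const)
  then show "\<exists>g'. (\<exists>a b. g' = (\<lambda>e. a * e + b)) \<and> (\<forall>t\<in>I_set. (g has_real_derivative g' t) (at t within I_set))"
    by (intro exI[of _ "\<lambda>e. 0 * e + a"] conjI exI[of _ 0] exI[of _ a]) simp_all
qed (intro exI[of _ 1] exI[of _ 0], simp)

lemma smooth_net_imp_continuous: "smooth_net f \<Longrightarrow> continuous_on I_set f"
  by (metis smooth_net_has_derivative DERIV_continuous continuous_on_eq_continuous_within)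

definition flat_exp :: "real \<Rightarrow> real" where
  "flat_exp e = exp (- inverse e)"

lemma flat_exp_pos: "0 < flat_exp e"
  by (simp add: flat_exp_def)

lemma smooth_net_flat_exp: "smooth_net flat_exp"
proof -
  have "(\<lambda>e. exp (- 1 * inverse e)) \<in> smooth_closure"
    by (intro smooth_closure.exp smooth_closure.mult smooth_closure_const
        smooth_closure.inverse smooth_closure.smooth[OF smooth_net_ident])
       (simp add: I_set_def)
  then show ?thesis
    unfolding flat_exp_def[abs_def] by (simp add: smooth_closure_smooth)
qed

definition smooth_abs :: "(real \<Rightarrow> real) \<Rightarrow> real \<Rightarrow> real" where
  "smooth_abs h e = sqrt ((h e)\<^sup>2 + (flat_exp e)\<^sup>2)"

lemma smooth_net_smooth_abs: "smooth_net h \<Longrightarrow> smooth_net (smooth_abs h)"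
proof -
  assume h: "smooth_net h"
  have "\<forall>t\<in>I_set. 0 < h t * h t + flat_exp t * flat_exp t"
    using flat_exp_pos by (simp add: add_nonneg_pos)
  with h have "(\<lambda>e. sqrt (h e * h e + flat_exp e * flat_exp e)) \<in> smooth_closure"
    by (intro smooth_closure.sqrt smooth_closure.add smooth_closure.mult
        smooth_closure.smooth smooth_net_flat_exp)
  then show ?thesis
    unfolding smooth_abs_def[abs_def] power2_eq_square by (rule smooth_closure_smooth)
qed

lemma abs_le_smooth_abs: "\<bar>h e\<bar> \<le> smooth_abs h e"
  unfolding smooth_abs_def by (rule real_le_rsqrt) simp

lemma smooth_abs_le: "smooth_abs h e \<le> \<bar>h e\<bar> + flat_exp e"
  unfolding smooth_abs_def using flat_exp_pos[of e]
  by (intro real_le_lsqrt) (auto simp: power2_eq_square algebra_simps)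

definition smooth_min :: "(real \<Rightarrow> real) \<Rightarrow> (real \<Rightarrow> real) \<Rightarrow> real \<Rightarrow> real" where
  "smooth_min r s e = (r e + s e - smooth_abs (\<lambda>e. r e - s e) e) / 2"

definition smooth_max :: "(real \<Rightarrow> real) \<Rightarrow> (real \<Rightarrow> real) \<Rightarrow> real \<Rightarrow> real" where
  "smooth_max r s e = (r e + s e + smooth_abs (\<lambda>e. r e - s e) e) / 2"

lemma smooth_min_approx: "\<bar>smooth_min r s e - min (r e) (s e)\<bar> \<le> flat_exp e"
  using abs_le_smooth_abs[of "\<lambda>e. r e - s e" e] smooth_abs_le[of "\<lambda>e. r e - s e" e] flat_exp_pos[of e]
  unfolding smooth_min_def by argo

lemma smooth_max_approx: "\<bar>smooth_max r s e - max (r e) (s e)\<bar> \<le> flat_exp e"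
  using abs_le_smooth_abs[of "\<lambda>e. r e - s e" e] smooth_abs_le[of "\<lambda>e. r e - s e" e] flat_exp_pos[of e]
  unfolding smooth_max_def by argo

lemma smooth_min_le_min: "smooth_min r s e \<le> min (r e) (s e)"
  using abs_le_smooth_abs[of "\<lambda>e. r e - s e" e] unfolding smooth_min_def by argo

lemma max_le_smooth_max: "max (r e) (s e) \<le> smooth_max r s e"
  using abs_le_smooth_abs[of "\<lambda>e. r e - s e" e] unfolding smooth_max_def by argo

lemma smooth_net_half: "smooth_net f \<Longrightarrow> smooth_net (\<lambda>e. f e / 2)"
  using smooth_net_mult[OF _ smooth_net_const, of f "1 / 2"] by simp

lemma smooth_net_smooth_min: "smooth_net r \<Longrightarrow> smooth_net s \<Longrightarrow> smooth_net (smooth_min r s)"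
  unfolding smooth_min_def[abs_def]
  by (intro smooth_net_half smooth_net_diff smooth_net_add smooth_net_smooth_abs)

lemma smooth_net_smooth_max: "smooth_net r \<Longrightarrow> smooth_net s \<Longrightarrow> smooth_net (smooth_max r s)"
  unfolding smooth_max_def[abs_def]
  by (intro smooth_net_half smooth_net_diff smooth_net_add smooth_net_smooth_abs)

section \<open>Moderate and negligible nets\<close>

lemma eventually_at_right_I_set: "\<forall>\<^sub>F e in at_right 0. e \<in> I_set"
  unfolding I_set_def eventually_at_right_field by (intro exI[of _ 1]) auto

lemma bigo_at_right_dominated:
  fixes d a g :: "real \<Rightarrow> real"
  assumes "a \<in> O[at_right 0](g)" and "\<And>e. e \<in> I_set \<Longrightarrow> \<bar>d e\<bar> \<le> \<bar>a e\<bar>"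
  shows "d \<in> O[at_right 0](g)"
proof -
  have "d \<in> O[at_right 0](a)"
    by (intro bigoI[of _ 1] eventually_mono[OF eventually_at_right_I_set]) (simp add: assms(2))
  then show ?thesis using assms(1) by (rule landau_o.big_trans)
qed

lemma moderate_net_dominated:
  "moderate_net a \<Longrightarrow> (\<And>e. e \<in> I_set \<Longrightarrow> \<bar>d e\<bar> \<le> \<bar>a e\<bar>) \<Longrightarrow> moderate_net d"
  unfolding moderate_net_def using bigo_at_right_dominated by metis

lemma negligible_net_dominated:
  "negligible_net a \<Longrightarrow> (\<And>e. e \<in> I_set \<Longrightarrow> \<bar>d e\<bar> \<le> \<bar>a e\<bar>) \<Longrightarrow> negligible_net d"
  unfolding negligible_net_def using bigo_at_right_dominated by metis

lemma inverse_power_bigo_mono: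
  assumes "N \<le> M"
  shows "(\<lambda>e::real. inverse (e ^ N)) \<in> O[at_right 0](\<lambda>e. inverse (e ^ M))"
proof (intro bigoI[of _ 1] eventually_mono[OF eventually_at_right_I_set])
  fix e :: real assume "e \<in> I_set"
  then have "0 < e" "e \<le> 1" by (auto simp: I_set_def)
  then have "e ^ M \<le> e ^ N" using assms by (intro power_decreasing) auto
  with \<open>0 < e\<close> show "norm (inverse (e ^ N)) \<le> 1 * norm (inverse (e ^ M))"
    by (simp add: le_imp_inverse_le)
qed

lemma moderate_net_const: "moderate_net (\<lambda>_. c)"
  unfolding moderate_net_def by (intro exI[of _ 0]) simp

lemma moderate_net_add:
  assumes "moderate_net r" "moderate_net s"
  shows "moderate_net (\<lambda>e. r e + s e)"
proof -
  obtain N M where "r \<in> O[at_right 0](\<lambda>e. inverse (e ^ N))" "s \<in> O[at_right 0](\<lambda>e. inverse (e ^ M))"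
    using assms unfolding moderate_net_def by blast
  then have "r \<in> O[at_right 0](\<lambda>e. inverse (e ^ (N + M)))" "s \<in> O[at_right 0](\<lambda>e. inverse (e ^ (N + M)))"
    by (simp_all add: landau_o.big_trans[OF _ inverse_power_bigo_mono])
  then show ?thesis
    unfolding moderate_net_def by (blast intro: sum_in_bigo(1))
qed

lemma moderate_net_mult:
  assumes "moderate_net r" "moderate_net s"
  shows "moderate_net (\<lambda>e. r e * s e)"
proof -
  obtain N M where "r \<in> O[at_right 0](\<lambda>e. inverse (e ^ N))" "s \<in> O[at_right 0](\<lambda>e. inverse (e ^ M))"
    using assms unfolding moderate_net_def by blast
  then have "(\<lambda>e. r e * s e) \<in> O[at_right 0](\<lambda>e. inverse (e ^ N) * inverse (e ^ M))"
    by (rule landau_o.big.mult)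
  then show ?thesis
    unfolding moderate_net_def by (intro exI[of _ "N + M"]) (simp add: power_add)
qed

lemma negligible_net_zero: "negligible_net (\<lambda>_. 0)"
  unfolding negligible_net_def by simp

lemma negligible_net_add:
  "negligible_net r \<Longrightarrow> negligible_net s \<Longrightarrow> negligible_net (\<lambda>e. r e + s e)"
  unfolding negligible_net_def by (simp add: sum_in_bigo(1))

lemma negligible_net_uminus: "negligible_net r \<Longrightarrow> negligible_net (\<lambda>e. - r e)"
  unfolding negligible_net_def by simp

lemma negligible_net_diff:
  "negligible_net r \<Longrightarrow> negligible_net s \<Longrightarrow> negligible_net (\<lambda>e. r e - s e)"
  unfolding negligible_net_def by (simp add: sum_in_bigo(2))

lemma negligible_imp_moderate_net:
  assumes "negligible_net r"
  shows "moderate_net r"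
proof -
  have "r \<in> O[at_right 0](\<lambda>e. e ^ 0)"
    using assms unfolding negligible_net_def by blast
  then show ?thesis
    unfolding moderate_net_def by (intro exI[of _ 0]) simp
qed

lemma negligible_net_mult_moderate:
  assumes "negligible_net r" "moderate_net s"
  shows "negligible_net (\<lambda>e. r e * s e)"
  unfolding negligible_net_def
proof
  fix m
  obtain N where "s \<in> O[at_right 0](\<lambda>e. inverse (e ^ N))"
    using assms(2) unfolding moderate_net_def by blast
  moreover have "r \<in> O[at_right 0](\<lambda>e. e ^ (m + N))"
    using assms(1) unfolding negligible_net_def by blast
  ultimately have "(\<lambda>e. r e * s e) \<in> O[at_right 0](\<lambda>e. e ^ (m + N) * inverse (e ^ N))"
    by (intro landau_o.big.mult)
  also have "\<forall>\<^sub>F e in at_right 0. e ^ (m + N) * inverse (e ^ N) = (e::real) ^ m"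
    by (rule eventually_mono[OF eventually_at_right_I_set]) (simp add: I_set_def power_add)
  then have "O[at_right 0](\<lambda>e. e ^ (m + N) * inverse (e ^ N)) = O[at_right 0](\<lambda>e. (e::real) ^ m)"
    by (rule landau_o.big.cong)
  finally show "(\<lambda>e. r e * s e) \<in> O[at_right 0](\<lambda>e. e ^ m)" .
qed

lemma flat_exp_le_power:
  assumes "e \<in> I_set"
  shows "flat_exp e \<le> real (Suc m) ^ Suc m * e ^ m"
proof -
  define n where "n = Suc m"
  have e: "0 < e" "e \<le> 1" using assms by (auto simp: I_set_def)
  have "(inverse e / real n) ^ n \<le> (1 + inverse e / real n) ^ n"
    using e by (intro power_mono) (auto simp: n_def)
  also have "\<dots> \<le> exp (inverse e)"
  proof (rule exp_ge_one_plus_x_over_n_power_n)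
    show "- real n \<le> inverse e" using e by (simp add: order.trans[of _ 0])
  qed (simp add: n_def)
  finally have "inverse (exp (inverse e)) \<le> inverse ((inverse e / real n) ^ n)"
    using e by (intro le_imp_inverse_le) (auto simp: n_def)
  also have "\<dots> = real n ^ n * e ^ n"
    by (simp add: power_divide power_inverse) (simp add: divide_inverse)
  also have "\<dots> \<le> real n ^ n * e ^ m"
    using e by (intro mult_left_mono power_decreasing) (auto simp: n_def)
  finally show ?thesis by (simp add: flat_exp_def exp_minus n_def)
qed

lemma negligible_net_flat_exp: "negligible_net flat_exp"
  unfolding negligible_net_def
proof
  fix m
  show "flat_exp \<in> O[at_right 0](\<lambda>e. e ^ m)"
  proof (intro bigoI eventually_mono[OF eventually_at_right_I_set])
    fix e assume e: "e \<in> I_set"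
    then have "0 < e" by (simp add: I_set_def)
    with flat_exp_le_power[OF e, of m] flat_exp_pos[of e]
    show "norm (flat_exp e) \<le> real (Suc m) ^ Suc m * norm (e ^ m)" by simp
  qed
qed

lemma moderate_net_abs: "moderate_net r \<Longrightarrow> moderate_net (\<lambda>e. \<bar>r e\<bar>)"
  by (erule moderate_net_dominated) simp

lemma negligible_net_abs: "negligible_net r \<Longrightarrow> negligible_net (\<lambda>e. \<bar>r e\<bar>)"
  by (erule negligible_net_dominated) simp

section \<open>The quotient ring\<close>

lemma E_sm_const: "(\<lambda>_. c) \<in> E_sm"
  by (simp add: E_sm_def smooth_net_const moderate_net_const)

lemma E_sm_add: "r \<in> E_sm \<Longrightarrow> s \<in> E_sm \<Longrightarrow> (\<lambda>e. r e + s e) \<in> E_sm"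
  by (simp add: E_sm_def smooth_net_add moderate_net_add)

lemma E_sm_mult: "r \<in> E_sm \<Longrightarrow> s \<in> E_sm \<Longrightarrow> (\<lambda>e. r e * s e) \<in> E_sm"
  by (simp add: E_sm_def smooth_net_mult moderate_net_mult)

lemma E_sm_uminus: "r \<in> E_sm \<Longrightarrow> (\<lambda>e. - r e) \<in> E_sm"
  using E_sm_mult[OF E_sm_const, of r "- 1"] by simp

lemma N_sm_subset_E_sm: "N_sm \<subseteq> E_sm"
  by (auto simp: N_sm_def E_sm_def negligible_imp_moderate_net)

lemma N_sm_zero: "(\<lambda>_. 0) \<in> N_sm"
  by (simp add: N_sm_def smooth_net_const negligible_net_zero)

lemma N_sm_add: "r \<in> N_sm \<Longrightarrow> s \<in> N_sm \<Longrightarrow> (\<lambda>e. r e + s e) \<in> N_sm"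
  by (simp add: N_sm_def smooth_net_add negligible_net_add)

lemma N_sm_diff: "r \<in> N_sm \<Longrightarrow> s \<in> N_sm \<Longrightarrow> (\<lambda>e. r e - s e) \<in> N_sm"
  by (simp add: N_sm_def smooth_net_diff negligible_net_diff)

lemma N_sm_uminus: "r \<in> N_sm \<Longrightarrow> (\<lambda>e. - r e) \<in> N_sm"
  by (simp add: N_sm_def smooth_net_uminus negligible_net_uminus)

lemma N_sm_mult_E_sm: "r \<in> N_sm \<Longrightarrow> s \<in> E_sm \<Longrightarrow> (\<lambda>e. r e * s e) \<in> N_sm"
  by (simp add: N_sm_def E_sm_def smooth_net_mult negligible_net_mult_moderate)

lemma N_sm_flat_exp: "flat_exp \<in> N_sm"
  by (simp add: N_sm_def smooth_net_flat_exp negligible_net_flat_exp)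

lemma N_sm_smooth_abs:
  assumes "n \<in> N_sm"
  shows "smooth_abs n \<in> N_sm"
proof -
  have n: "smooth_net n" "negligible_net n" using assms by (simp_all add: N_sm_def)
  have "negligible_net (\<lambda>e. \<bar>n e\<bar> + flat_exp e)"
    by (rule negligible_net_add[OF negligible_net_abs[OF n(2)] negligible_net_flat_exp])
  then have "negligible_net (smooth_abs n)"
  proof (rule negligible_net_dominated)
    show "\<bar>smooth_abs n e\<bar> \<le> \<bar>\<bar>n e\<bar> + flat_exp e\<bar>" for e
      using abs_le_smooth_abs[of n e] smooth_abs_le[of n e] flat_exp_pos[of e] by argo
  qed
  with n show ?thesis by (simp add: N_sm_def smooth_net_smooth_abs)
qed

lemma E_sm_smooth_min_max:
  assumes "r \<in> E_sm" "s \<in> E_sm"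
  shows "smooth_min r s \<in> E_sm" "smooth_max r s \<in> E_sm"
proof -
  have r: "smooth_net r" "moderate_net r" and s: "smooth_net s" "moderate_net s"
    using assms by (simp_all add: E_sm_def)
  define bound where "bound e = \<bar>r e\<bar> + \<bar>s e\<bar> + flat_exp e" for e
  have mb: "moderate_net bound"
    unfolding bound_def[abs_def]
    by (intro moderate_net_add moderate_net_abs r(2) s(2) negligible_imp_moderate_net[OF negligible_net_flat_exp])
  have "\<bar>smooth_min r s e\<bar> \<le> \<bar>bound e\<bar>" "\<bar>smooth_max r s e\<bar> \<le> \<bar>bound e\<bar>" for e
    using smooth_min_approx[of r s e] smooth_max_approx[of r s e] flat_exp_pos[of e]
    unfolding bound_def by argo+
  then have "moderate_net (smooth_min r s)" "moderate_net (smooth_max r s)"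
    by (simp_all add: moderate_net_dominated[OF mb])
  with r s show "smooth_min r s \<in> E_sm" "smooth_max r s \<in> E_sm"
    by (simp_all add: E_sm_def smooth_net_smooth_min smooth_net_smooth_max)
qed

lemma equiv_rel_sm: "equiv E_sm rel_sm"
proof (rule equivI)
  show "refl_on E_sm rel_sm"
    unfolding refl_on_def rel_sm_def by (simp add: N_sm_zero)
  show "sym rel_sm"
    unfolding sym_def rel_sm_def using N_sm_uminus by fastforce
  show "trans rel_sm"
    unfolding trans_def rel_sm_def using N_sm_add by fastforce
  show "rel_sm \<subseteq> E_sm \<times> E_sm"
    unfolding rel_sm_def by blast
qed

lemma in_cls_sm_iff: "s \<in> cls_sm r \<longleftrightarrow> (r, s) \<in> rel_sm"
  by (simp add: cls_sm_def)

lemma cls_sm_self: "r \<in> E_sm \<Longrightarrow> r \<in> cls_sm r"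
  using equiv_rel_sm unfolding in_cls_sm_iff equiv_def refl_on_def by blast

lemma cls_sm_eq_iff: "r \<in> E_sm \<Longrightarrow> s \<in> E_sm \<Longrightarrow> cls_sm r = cls_sm s \<longleftrightarrow> (\<lambda>e. r e - s e) \<in> N_sm"
  unfolding cls_sm_def using eq_equiv_class_iff[OF equiv_rel_sm] by (simp add: rel_sm_def)

lemma cls_sm_in_Rsm: "r \<in> E_sm \<Longrightarrow> cls_sm r \<in> Rsm"
  unfolding Rsm_def cls_sm_def by (rule quotientI)

lemma Rsm_cases:
  assumes "X \<in> Rsm"
  obtains r where "r \<in> E_sm" "X = cls_sm r"
  using assms unfolding Rsm_def cls_sm_def by (blast elim: quotientE)

lemma UN_cls_sm_cls_sm:
  assumes "\<And>r' s'. r' \<in> cls_sm r \<Longrightarrow> s' \<in> cls_sm s \<Longrightarrow> cls_sm (F r' s') = cls_sm (F r s)"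
    and "r \<in> E_sm" "s \<in> E_sm"
  shows "(\<Union>r'\<in>cls_sm r. \<Union>s'\<in>cls_sm s. cls_sm (F r' s')) = cls_sm (F r s)"
  using assms cls_sm_self by blast

lemma add_sm_cls:
  assumes "r \<in> E_sm" "s \<in> E_sm"
  shows "add_sm (cls_sm r) (cls_sm s) = cls_sm (\<lambda>e. r e + s e)"
  unfolding add_sm_def
proof (rule UN_cls_sm_cls_sm[OF _ assms])
  fix r' s' assume "r' \<in> cls_sm r" "s' \<in> cls_sm s"
  then have r': "r' \<in> E_sm" "(\<lambda>e. r e - r' e) \<in> N_sm" and s': "s' \<in> E_sm" "(\<lambda>e. s e - s' e) \<in> N_sm"
    by (simp_all add: in_cls_sm_iff rel_sm_def)
  have "(\<lambda>e. (r' e + s' e) - (r e + s e)) = (\<lambda>e. - ((r e - r' e) + (s e - s' e)))"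
    by (simp add: algebra_simps)
  moreover have "(\<lambda>e. - ((r e - r' e) + (s e - s' e))) \<in> N_sm"
    by (intro N_sm_uminus N_sm_add r'(2) s'(2))
  ultimately have "(\<lambda>e. (r' e + s' e) - (r e + s e)) \<in> N_sm"
    by (simp only:)
  with r' s' assms show "cls_sm (\<lambda>e. r' e + s' e) = cls_sm (\<lambda>e. r e + s e)"
    by (simp add: cls_sm_eq_iff E_sm_add)
qed

lemma mult_sm_cls:
  assumes "r \<in> E_sm" "s \<in> E_sm"
  shows "mult_sm (cls_sm r) (cls_sm s) = cls_sm (\<lambda>e. r e * s e)"
  unfolding mult_sm_def
proof (rule UN_cls_sm_cls_sm[OF _ assms])
  fix r' s' assume "r' \<in> cls_sm r" "s' \<in> cls_sm s"
  then have r': "r' \<in> E_sm" "(\<lambda>e. r e - r' e) \<in> N_sm" and s': "s' \<in> E_sm" "(\<lambda>e. s e - s' e) \<in> N_sm"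
    by (simp_all add: in_cls_sm_iff rel_sm_def)
  have "(\<lambda>e. r' e * s' e - r e * s e) = (\<lambda>e. - ((r e - r' e) * s' e + (s e - s' e) * r e))"
    by (simp add: algebra_simps)
  moreover have "(\<lambda>e. - ((r e - r' e) * s' e + (s e - s' e) * r e)) \<in> N_sm"
    by (intro N_sm_uminus N_sm_add N_sm_mult_E_sm r' s' assms)
  ultimately have "(\<lambda>e. r' e * s' e - r e * s e) \<in> N_sm"
    by (simp only:)
  with r' s' assms show "cls_sm (\<lambda>e. r' e * s' e) = cls_sm (\<lambda>e. r e * s e)"
    by (simp add: cls_sm_eq_iff E_sm_mult)
qed

lemma Rsm_ring_simps:
  "carrier Rsm_ring = Rsm" "add Rsm_ring = add_sm" "mult Rsm_ring = mult_sm"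
  "zero Rsm_ring = cls_sm (\<lambda>_. 0)" "one Rsm_ring = cls_sm (\<lambda>_. 1)"
  by (simp_all add: Rsm_ring_def)

lemma ring_Rsm_ring: "ring Rsm_ring"
proof (rule ringI)
  show "abelian_group Rsm_ring"
  proof (rule abelian_groupI, unfold Rsm_ring_simps)
    fix x y z
    assume "x \<in> Rsm" "y \<in> Rsm" "z \<in> Rsm"
    then show "add_sm (add_sm x y) z = add_sm x (add_sm y z)"
      by (elim Rsm_cases) (simp add: add_sm_cls E_sm_add add.assoc)
  next
    fix x y
    assume "x \<in> Rsm" "y \<in> Rsm"
    then show "add_sm x y \<in> Rsm" "add_sm x y = add_sm y x"
      by (elim Rsm_cases, simp add: add_sm_cls E_sm_add cls_sm_in_Rsm add.commute)+
  next
    fix x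
    assume "x \<in> Rsm"
    then obtain r where r: "r \<in> E_sm" "x = cls_sm r" by (rule Rsm_cases)
    then show "add_sm (cls_sm (\<lambda>e. 0)) x = x"
      by (simp add: add_sm_cls E_sm_const)
    show "\<exists>y\<in>Rsm. add_sm y x = cls_sm (\<lambda>e. 0)"
      using r by (intro bexI[of _ "cls_sm (\<lambda>e. - r e)"]) (simp_all add: add_sm_cls E_sm_uminus cls_sm_in_Rsm)
  qed (simp add: cls_sm_in_Rsm E_sm_const)
next
  show "monoid Rsm_ring"
  proof (rule monoidI, unfold Rsm_ring_simps)
    fix x y z
    assume "x \<in> Rsm" "y \<in> Rsm" "z \<in> Rsm"
    then show "mult_sm (mult_sm x y) z = mult_sm x (mult_sm y z)"
      by (elim Rsm_cases) (simp add: mult_sm_cls E_sm_mult mult.assoc)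
  next
    fix x y
    assume "x \<in> Rsm" "y \<in> Rsm"
    then show "mult_sm x y \<in> Rsm"
      by (elim Rsm_cases) (simp add: mult_sm_cls E_sm_mult cls_sm_in_Rsm)
  next
    fix x
    assume "x \<in> Rsm"
    then show "mult_sm (cls_sm (\<lambda>e. 1)) x = x" "mult_sm x (cls_sm (\<lambda>e. 1)) = x"
      by (elim Rsm_cases, simp add: mult_sm_cls E_sm_const)+
  qed (simp add: cls_sm_in_Rsm E_sm_const)
next
  fix x y z
  assume "x \<in> carrier Rsm_ring" "y \<in> carrier Rsm_ring" "z \<in> carrier Rsm_ring"
  then show "(x \<oplus>\<^bsub>Rsm_ring\<^esub> y) \<otimes>\<^bsub>Rsm_ring\<^esub> z = x \<otimes>\<^bsub>Rsm_ring\<^esub> z \<oplus>\<^bsub>Rsm_ring\<^esub> y \<otimes>\<^bsub>Rsm_ring\<^esub> z"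
    and "z \<otimes>\<^bsub>Rsm_ring\<^esub> (x \<oplus>\<^bsub>Rsm_ring\<^esub> y) = z \<otimes>\<^bsub>Rsm_ring\<^esub> x \<oplus>\<^bsub>Rsm_ring\<^esub> z \<otimes>\<^bsub>Rsm_ring\<^esub> y"
    unfolding Rsm_ring_simps
    by (elim Rsm_cases, simp add: mult_sm_cls add_sm_cls E_sm_mult E_sm_add algebra_simps)+
qed

section \<open>Order, lattice operations and the f-ring law\<close>

lemma le_sm_cls_iff:
  assumes r: "r \<in> E_sm" and s: "s \<in> E_sm"
  shows "le_sm (cls_sm r) (cls_sm s) \<longleftrightarrow> (\<exists>n\<in>N_sm. \<forall>e\<in>I_set. r e \<le> s e + n e)"
proof
  assume "le_sm (cls_sm r) (cls_sm s)"
  then obtain r' s' where "r' \<in> cls_sm r" "s' \<in> cls_sm s" and le: "\<forall>e\<in>I_set. r' e \<le> s' e"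
    unfolding le_sm_def by blast
  then have "(\<lambda>e. r e - r' e) \<in> N_sm" "(\<lambda>e. s e - s' e) \<in> N_sm"
    by (simp_all add: in_cls_sm_iff rel_sm_def)
  then have "(\<lambda>e. (r e - r' e) - (s e - s' e)) \<in> N_sm" by (rule N_sm_diff)
  then show "\<exists>n\<in>N_sm. \<forall>e\<in>I_set. r e \<le> s e + n e"
  proof (rule bexI[rotated])
    show "\<forall>e\<in>I_set. r e \<le> s e + ((r e - r' e) - (s e - s' e))" using le by auto
  qed
next
  assume "\<exists>n\<in>N_sm. \<forall>e\<in>I_set. r e \<le> s e + n e"
  then obtain n where n: "n \<in> N_sm" and le: "\<forall>e\<in>I_set. r e \<le> s e + n e" by blast
  have "(\<lambda>e. s e - (s e + n e)) \<in> N_sm" using N_sm_uminus[OF n] by simp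
  then have shifted: "(\<lambda>e. s e + n e) \<in> cls_sm s"
    using s E_sm_add[OF s] n N_sm_subset_E_sm by (auto simp: in_cls_sm_iff rel_sm_def)
  show "le_sm (cls_sm r) (cls_sm s)"
    unfolding le_sm_def
    by (intro bexI[OF _ cls_sm_self[OF r]] bexI[OF _ shifted]) (use le in simp)
qed

lemma le_sm_clsI:
  assumes "r \<in> E_sm" "s \<in> E_sm" "n \<in> N_sm" "\<And>e. e \<in> I_set \<Longrightarrow> r e \<le> s e + n e"
  shows "le_sm (cls_sm r) (cls_sm s)"
  using assms by (auto simp: le_sm_cls_iff)

lemma le_sm_refl: "X \<in> Rsm \<Longrightarrow> le_sm X X"
  by (erule Rsm_cases) (auto simp: le_sm_cls_iff intro!: bexI[OF _ N_sm_zero])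

lemma le_sm_antisym:
  assumes "X \<in> Rsm" "Y \<in> Rsm" "le_sm X Y" "le_sm Y X"
  shows "X = Y"
proof -
  obtain r s where r: "r \<in> E_sm" "X = cls_sm r" and s: "s \<in> E_sm" "Y = cls_sm s"
    using assms(1,2) by (meson Rsm_cases)
  obtain n1 n2 where n: "n1 \<in> N_sm" "n2 \<in> N_sm"
    and le: "\<forall>e\<in>I_set. r e \<le> s e + n1 e" "\<forall>e\<in>I_set. s e \<le> r e + n2 e"
    using assms(3,4) r s by (auto simp: le_sm_cls_iff)
  have "negligible_net (\<lambda>e. \<bar>n1 e\<bar> + \<bar>n2 e\<bar>)"
    using n by (intro negligible_net_add negligible_net_abs) (simp_all add: N_sm_def)
  then have "negligible_net (\<lambda>e. r e - s e)"
  proof (rule negligible_net_dominated)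
    show "\<bar>r e - s e\<bar> \<le> \<bar>\<bar>n1 e\<bar> + \<bar>n2 e\<bar>\<bar>" if "e \<in> I_set" for e
      using le that by (auto simp: abs_le_iff)
  qed
  with r s show ?thesis
    by (simp add: cls_sm_eq_iff N_sm_def E_sm_def smooth_net_diff)
qed

lemma le_sm_trans:
  assumes "X \<in> Rsm" "Y \<in> Rsm" "Z \<in> Rsm" "le_sm X Y" "le_sm Y Z"
  shows "le_sm X Z"
proof -
  obtain r s t where r: "r \<in> E_sm" "X = cls_sm r" and s: "s \<in> E_sm" "Y = cls_sm s"
    and t: "t \<in> E_sm" "Z = cls_sm t"
    using assms(1-3) by (meson Rsm_cases)
  obtain n1 n2 where n: "n1 \<in> N_sm" "n2 \<in> N_sm"
    and le: "\<forall>e\<in>I_set. r e \<le> s e + n1 e" "\<forall>e\<in>I_set. s e \<le> t e + n2 e"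
    using assms(4,5) r s t by (auto simp: le_sm_cls_iff)
  have "le_sm (cls_sm r) (cls_sm t)"
  proof (rule le_sm_clsI[OF r(1) t(1) N_sm_add[OF n]])
    show "r e \<le> t e + (n1 e + n2 e)" if "e \<in> I_set" for e
      using le that by force
  qed
  with r t show ?thesis by simp
qed

lemma le_sm_add_right:
  assumes "X \<in> Rsm" "Y \<in> Rsm" "Z \<in> Rsm" "le_sm X Y"
  shows "le_sm (add_sm X Z) (add_sm Y Z)"
proof -
  obtain r s t where r: "r \<in> E_sm" "X = cls_sm r" and s: "s \<in> E_sm" "Y = cls_sm s"
    and t: "t \<in> E_sm" "Z = cls_sm t"
    using assms(1-3) by (meson Rsm_cases)
  obtain n where "n \<in> N_sm" "\<forall>e\<in>I_set. r e \<le> s e + n e"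
    using assms(4) r s by (auto simp: le_sm_cls_iff)
  then show ?thesis
    using r s t by (simp add: add_sm_cls le_sm_clsI E_sm_add)
qed

lemma le_sm_mult_nonneg:
  assumes "X \<in> Rsm" "Y \<in> Rsm" "le_sm (cls_sm (\<lambda>_. 0)) X" "le_sm (cls_sm (\<lambda>_. 0)) Y"
  shows "le_sm (cls_sm (\<lambda>_. 0)) (mult_sm X Y)"
proof -
  obtain r s where r: "r \<in> E_sm" "X = cls_sm r" and s: "s \<in> E_sm" "Y = cls_sm s"
    using assms(1,2) by (meson Rsm_cases)
  obtain n1 n2 where n: "n1 \<in> N_sm" "n2 \<in> N_sm"
    and le: "\<forall>e\<in>I_set. 0 \<le> r e + n1 e" "\<forall>e\<in>I_set. 0 \<le> s e + n2 e"
    using assms(3,4) r s by (auto simp: le_sm_cls_iff E_sm_const)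
  have "(\<lambda>e. n1 e * s e + n2 e * r e + n1 e * n2 e) \<in> N_sm"
    using n N_sm_subset_E_sm by (intro N_sm_add N_sm_mult_E_sm r s) auto
  moreover have "0 \<le> r e * s e + (n1 e * s e + n2 e * r e + n1 e * n2 e)" if "e \<in> I_set" for e
  proof -
    have "0 \<le> (r e + n1 e) * (s e + n2 e)" using le that by simp
    then show ?thesis by (simp add: algebra_simps)
  qed
  ultimately show ?thesis
    using r s by (simp add: mult_sm_cls le_sm_clsI E_sm_const E_sm_mult)
qed

lemma equiv_rel_co: "equiv E_co rel_co"
proof (rule equivI)
  show "refl_on E_co rel_co"
    unfolding refl_on_def rel_co_def N_co_def by (simp add: negligible_net_zero)
  show "sym rel_co"
  proof (rule symI)
    fix r s assume "(r, s) \<in> rel_co"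
    then have "continuous_on I_set (\<lambda>e. s e - r e)" "negligible_net (\<lambda>e. s e - r e)"
      using negligible_net_uminus[of "\<lambda>e. r e - s e"]
      by (simp_all add: rel_co_def E_co_def N_co_def continuous_on_diff)
    with \<open>(r, s) \<in> rel_co\<close> show "(s, r) \<in> rel_co"
      by (simp add: rel_co_def N_co_def)
  qed
  show "trans rel_co"
  proof (rule transI)
    fix r s t assume "(r, s) \<in> rel_co" "(s, t) \<in> rel_co"
    then have "continuous_on I_set (\<lambda>e. r e - t e)" "negligible_net (\<lambda>e. r e - t e)"
      using negligible_net_add[of "\<lambda>e. r e - s e" "\<lambda>e. s e - t e"]
      by (simp_all add: rel_co_def E_co_def N_co_def continuous_on_diff)
    with \<open>(r, s) \<in> rel_co\<close> \<open>(s, t) \<in> rel_co\<close> show "(r, t) \<in> rel_co"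
      by (simp add: rel_co_def N_co_def)
  qed
  show "rel_co \<subseteq> E_co \<times> E_co"
    unfolding rel_co_def by blast
qed

lemma cls_co_eq_iff: "r \<in> E_co \<Longrightarrow> s \<in> E_co \<Longrightarrow> cls_co r = cls_co s \<longleftrightarrow> (\<lambda>e. r e - s e) \<in> N_co"
  unfolding cls_co_def using eq_equiv_class_iff[OF equiv_rel_co] by (simp add: rel_co_def)

lemma E_sm_subset_E_co: "E_sm \<subseteq> E_co"
  by (auto simp: E_sm_def E_co_def smooth_net_imp_continuous)

lemma tau_sm_cls:
  assumes "r \<in> E_sm"
  shows "tau_sm (cls_sm r) = cls_co r"
proof -
  have "rel_sm \<subseteq> rel_co"
    by (auto simp: rel_sm_def rel_co_def N_sm_def N_co_def E_sm_def E_co_def smooth_net_imp_continuous)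
  then have "(r, r') \<in> rel_co" if "r' \<in> cls_sm r" for r'
    using that by (auto simp: in_cls_sm_iff)
  then show ?thesis
    using equiv_rel_co cls_sm_self[OF assms]
    unfolding tau_sm_def cls_co_def equiv_def trans_def by blast
qed

lemma cls_sm_eq_iff_cls_co:
  assumes "r \<in> E_sm" "s \<in> E_sm"
  shows "cls_sm r = cls_sm s \<longleftrightarrow> cls_co r = cls_co s"
proof -
  have "smooth_net (\<lambda>e. r e - s e)"
    using assms by (simp add: E_sm_def smooth_net_diff)
  then have "(\<lambda>e. r e - s e) \<in> N_sm \<longleftrightarrow> (\<lambda>e. r e - s e) \<in> N_co"
    by (simp add: N_sm_def N_co_def smooth_net_imp_continuous)
  with assms E_sm_subset_E_co show ?thesis
    by (simp add: cls_sm_eq_iff cls_co_eq_iff subset_iff)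
qed

lemma cls_co_op_cls_sm:
  fixes op :: "real \<Rightarrow> real \<Rightarrow> real"
  assumes lipschitz: "\<And>a b c d. \<bar>op a b - op c d\<bar> \<le> \<bar>a - c\<bar> + \<bar>b - d\<bar>"
    and continuous: "\<And>f g. continuous_on I_set f \<Longrightarrow> continuous_on I_set g \<Longrightarrow>
      continuous_on I_set (\<lambda>e. op (f e) (g e))"
    and r': "r' \<in> cls_sm r" and s': "s' \<in> cls_sm s" and p: "p \<in> E_sm"
    and approx: "negligible_net (\<lambda>e. p e - op (r e) (s e))"
  shows "cls_co (\<lambda>e. op (r' e) (s' e)) = cls_co p"
proof -
  from r' s' have r'_E: "r' \<in> E_sm" "negligible_net (\<lambda>e. r e - r' e)"
    and s'_E: "s' \<in> E_sm" "negligible_net (\<lambda>e. s e - s' e)"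
    by (simp_all add: in_cls_sm_iff rel_sm_def N_sm_def)
  define q where "q e = op (r' e) (s' e)" for e
  have "negligible_net (\<lambda>e. \<bar>r e - r' e\<bar> + \<bar>s e - s' e\<bar> + \<bar>p e - op (r e) (s e)\<bar>)"
    by (intro negligible_net_add negligible_net_abs r'_E(2) s'_E(2) approx)
  then have neg: "negligible_net (\<lambda>e. q e - p e)"
  proof (rule negligible_net_dominated)
    show "\<bar>q e - p e\<bar> \<le> \<bar>\<bar>r e - r' e\<bar> + \<bar>s e - s' e\<bar> + \<bar>p e - op (r e) (s e)\<bar>\<bar>" for e
      using lipschitz[of "r' e" "s' e" "r e" "s e"] unfolding q_def by argo
  qed
  have "moderate_net (\<lambda>e. \<bar>q e - p e\<bar> + \<bar>p e\<bar>)"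
    using p unfolding E_sm_def
    by (intro moderate_net_add moderate_net_abs[OF negligible_imp_moderate_net[OF neg]] moderate_net_abs) simp
  then have "moderate_net q"
    by (rule moderate_net_dominated) argo
  moreover have "continuous_on I_set q"
    unfolding q_def using r'_E(1) s'_E(1) E_sm_subset_E_co by (intro continuous) (auto simp: E_co_def)
  moreover have p_co: "p \<in> E_co" using p E_sm_subset_E_co by blast
  ultimately have "q \<in> E_co" "(\<lambda>e. q e - p e) \<in> N_co"
    using neg by (auto simp: E_co_def N_co_def continuous_on_diff)
  with p_co show ?thesis
    unfolding q_def[symmetric] by (simp add: cls_co_eq_iff)
qed

text \<open>The preimage under the injective map tau_sm is unique, and any smooth net negligibly close
  to the pointwise operation on representatives is a witness.\<close>
lemma THE_tau_sm_preimage_op: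
  fixes op :: "real \<Rightarrow> real \<Rightarrow> real"
  assumes lipschitz: "\<And>a b c d. \<bar>op a b - op c d\<bar> \<le> \<bar>a - c\<bar> + \<bar>b - d\<bar>"
    and continuous: "\<And>f g. continuous_on I_set f \<Longrightarrow> continuous_on I_set g \<Longrightarrow>
      continuous_on I_set (\<lambda>e. op (f e) (g e))"
    and r: "r \<in> E_sm" and s: "s \<in> E_sm" and p: "p \<in> E_sm"
    and approx: "negligible_net (\<lambda>e. p e - op (r e) (s e))"
  shows "(THE Z. Z \<in> Rsm \<and> (\<exists>r'\<in>cls_sm r. \<exists>s'\<in>cls_sm s. tau_sm Z = cls_co (\<lambda>e. op (r' e) (s' e))))
    = cls_sm p"
proof -
  have rep: "cls_co (\<lambda>e. op (r' e) (s' e)) = cls_co p" if "r' \<in> cls_sm r" "s' \<in> cls_sm s" for r' s'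
    by (rule cls_co_op_cls_sm[where op = op]) (fact lipschitz continuous that p approx)+
  show ?thesis
  proof (rule the_equality)
    show "cls_sm p \<in> Rsm \<and> (\<exists>r'\<in>cls_sm r. \<exists>s'\<in>cls_sm s. tau_sm (cls_sm p) = cls_co (\<lambda>e. op (r' e) (s' e)))"
      using rep[OF cls_sm_self[OF r] cls_sm_self[OF s]] cls_sm_self[OF r] cls_sm_self[OF s]
      by (auto simp: tau_sm_cls[OF p] cls_sm_in_Rsm[OF p])
  next
    fix Z
    assume "Z \<in> Rsm \<and> (\<exists>r'\<in>cls_sm r. \<exists>s'\<in>cls_sm s. tau_sm Z = cls_co (\<lambda>e. op (r' e) (s' e)))"
    then obtain z r' s' where z: "z \<in> E_sm" "Z = cls_sm z" and "r' \<in> cls_sm r" "s' \<in> cls_sm s"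
      and "tau_sm Z = cls_co (\<lambda>e. op (r' e) (s' e))"
      by (blast elim: Rsm_cases)
    then have "cls_co z = cls_co p" using rep tau_sm_cls by simp
    with z p show "Z = cls_sm p" by (simp add: cls_sm_eq_iff_cls_co)
  qed
qed

lemma negligible_net_diff_flat_exp:
  "(\<And>e. \<bar>f e - g e\<bar> \<le> flat_exp e) \<Longrightarrow> negligible_net (\<lambda>e. f e - g e)"
  by (rule negligible_net_dominated[OF negligible_net_flat_exp]) (simp add: abs_of_pos flat_exp_pos)

lemma min_sm_cls:
  assumes "r \<in> E_sm" "s \<in> E_sm"
  shows "min_sm (cls_sm r) (cls_sm s) = cls_sm (smooth_min r s)"
  unfolding min_sm_def
proof (rule THE_tau_sm_preimage_op[OF _ _ assms E_sm_smooth_min_max(1)[OF assms]])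
  show "\<bar>min a b - min c d\<bar> \<le> \<bar>a - c\<bar> + \<bar>b - d\<bar>" for a b c d :: real by argo
qed (simp_all add: continuous_on_min negligible_net_diff_flat_exp smooth_min_approx)

lemma max_sm_cls:
  assumes "r \<in> E_sm" "s \<in> E_sm"
  shows "max_sm (cls_sm r) (cls_sm s) = cls_sm (smooth_max r s)"
  unfolding max_sm_def
proof (rule THE_tau_sm_preimage_op[OF _ _ assms E_sm_smooth_min_max(2)[OF assms]])
  show "\<bar>max a b - max c d\<bar> \<le> \<bar>a - c\<bar> + \<bar>b - d\<bar>" for a b c d :: real by argo
qed (simp_all add: continuous_on_max negligible_net_diff_flat_exp smooth_max_approx)

lemma min_sm_mult_nonneg_cls:
  assumes r: "r \<in> E_sm" and s: "s \<in> E_sm" and t: "t \<in> E_sm" and t_nonneg: "\<forall>e\<in>I_set. 0 \<le> t e"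
  shows "min_sm (cls_sm (\<lambda>e. r e * t e)) (cls_sm (\<lambda>e. s e * t e)) = cls_sm (\<lambda>e. smooth_min r s e * t e)"
  unfolding min_sm_def
proof (rule THE_tau_sm_preimage_op[OF _ _ E_sm_mult[OF r t] E_sm_mult[OF s t]
      E_sm_mult[OF E_sm_smooth_min_max(1)[OF r s] t]])
  show "\<bar>min a b - min c d\<bar> \<le> \<bar>a - c\<bar> + \<bar>b - d\<bar>" for a b c d :: real by argo
  have "negligible_net (\<lambda>e. flat_exp e * t e)"
    using t by (intro negligible_net_mult_moderate negligible_net_flat_exp) (simp add: E_sm_def)
  then show "negligible_net (\<lambda>e. smooth_min r s e * t e - min (r e * t e) (s e * t e))"
  proof (rule negligible_net_dominated)
    fix e assume "e \<in> I_set"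
    then have "min (r e * t e) (s e * t e) = min (r e) (s e) * t e"
      using t_nonneg by (simp add: min_mult_distrib_right)
    then show "\<bar>smooth_min r s e * t e - min (r e * t e) (s e * t e)\<bar> \<le> \<bar>flat_exp e * t e\<bar>"
      using smooth_min_approx[of r s e] by (simp add: left_diff_distrib[symmetric] abs_mult mult_right_mono)
  qed
qed (simp add: continuous_on_min)

lemma min_sm_inf:
  assumes "X \<in> Rsm" "Y \<in> Rsm"
  shows "min_sm X Y \<in> Rsm" "le_sm (min_sm X Y) X" "le_sm (min_sm X Y) Y"
    and "\<And>Z. Z \<in> Rsm \<Longrightarrow> le_sm Z X \<Longrightarrow> le_sm Z Y \<Longrightarrow> le_sm Z (min_sm X Y)"
proof -
  obtain r s where r: "r \<in> E_sm" "X = cls_sm r" and s: "s \<in> E_sm" "Y = cls_sm s"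
    using assms by (meson Rsm_cases)
  have m: "min_sm X Y = cls_sm (smooth_min r s)" and m_E: "smooth_min r s \<in> E_sm"
    using r s by (simp_all add: min_sm_cls E_sm_smooth_min_max)
  show "min_sm X Y \<in> Rsm" by (simp add: m m_E cls_sm_in_Rsm)
  have "le_sm (cls_sm (smooth_min r s)) (cls_sm r)" "le_sm (cls_sm (smooth_min r s)) (cls_sm s)"
    using smooth_min_le_min[of r s]
    by (intro le_sm_clsI[OF m_E _ N_sm_zero] r(1) s(1); simp)+
  then show "le_sm (min_sm X Y) X" "le_sm (min_sm X Y) Y"
    unfolding m using r(2) s(2) by simp_all
  fix Z assume "Z \<in> Rsm" "le_sm Z X" "le_sm Z Y"
  then obtain z n1 n2 where z: "z \<in> E_sm" "Z = cls_sm z" and n: "n1 \<in> N_sm" "n2 \<in> N_sm"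
    and le: "\<forall>e\<in>I_set. z e \<le> r e + n1 e" "\<forall>e\<in>I_set. z e \<le> s e + n2 e"
    using r s by (auto simp: le_sm_cls_iff elim!: Rsm_cases)
  have "le_sm (cls_sm z) (cls_sm (smooth_min r s))"
  proof (rule le_sm_clsI[OF z(1) m_E N_sm_add[OF N_sm_add[OF N_sm_smooth_abs N_sm_smooth_abs] N_sm_flat_exp]])
    show "z e \<le> smooth_min r s e + (smooth_abs n1 e + smooth_abs n2 e + flat_exp e)" if "e \<in> I_set" for e
      using bspec[OF le(1) that] bspec[OF le(2) that] smooth_min_approx[of r s e]
        abs_le_smooth_abs[of n1 e] abs_le_smooth_abs[of n2 e]
      by argo
  qed (fact n)+
  then show "le_sm Z (min_sm X Y)" by (simp add: z m)
qed

lemma max_sm_sup: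
  assumes "X \<in> Rsm" "Y \<in> Rsm"
  shows "max_sm X Y \<in> Rsm" "le_sm X (max_sm X Y)" "le_sm Y (max_sm X Y)"
    and "\<And>Z. Z \<in> Rsm \<Longrightarrow> le_sm X Z \<Longrightarrow> le_sm Y Z \<Longrightarrow> le_sm (max_sm X Y) Z"
proof -
  obtain r s where r: "r \<in> E_sm" "X = cls_sm r" and s: "s \<in> E_sm" "Y = cls_sm s"
    using assms by (meson Rsm_cases)
  have m: "max_sm X Y = cls_sm (smooth_max r s)" and m_E: "smooth_max r s \<in> E_sm"
    using r s by (simp_all add: max_sm_cls E_sm_smooth_min_max)
  show "max_sm X Y \<in> Rsm" by (simp add: m m_E cls_sm_in_Rsm)
  have "le_sm (cls_sm r) (cls_sm (smooth_max r s))" "le_sm (cls_sm s) (cls_sm (smooth_max r s))"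
    using max_le_smooth_max[where r = r and s = s]
    by (intro le_sm_clsI[OF _ m_E N_sm_zero] r(1) s(1); simp)+
  then show "le_sm X (max_sm X Y)" "le_sm Y (max_sm X Y)"
    unfolding m using r(2) s(2) by simp_all
  fix Z assume "Z \<in> Rsm" "le_sm X Z" "le_sm Y Z"
  then obtain z n1 n2 where z: "z \<in> E_sm" "Z = cls_sm z" and n: "n1 \<in> N_sm" "n2 \<in> N_sm"
    and le: "\<forall>e\<in>I_set. r e \<le> z e + n1 e" "\<forall>e\<in>I_set. s e \<le> z e + n2 e"
    using r s by (auto simp: le_sm_cls_iff elim!: Rsm_cases)
  have "le_sm (cls_sm (smooth_max r s)) (cls_sm z)"
  proof (rule le_sm_clsI[OF m_E z(1) N_sm_add[OF N_sm_add[OF N_sm_smooth_abs N_sm_smooth_abs] N_sm_flat_exp]])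
    show "smooth_max r s e \<le> z e + (smooth_abs n1 e + smooth_abs n2 e + flat_exp e)" if "e \<in> I_set" for e
      using bspec[OF le(1) that] bspec[OF le(2) that] smooth_max_approx[of r s e]
        abs_le_smooth_abs[of n1 e] abs_le_smooth_abs[of n2 e]
      by argo
  qed (fact n)+
  then show "le_sm (max_sm X Y) Z" by (simp add: z m)
qed

lemma min_sm_mult_nonneg:
  assumes "X \<in> Rsm" "Y \<in> Rsm" "W \<in> Rsm" "le_sm (cls_sm (\<lambda>_. 0)) W"
  shows "mult_sm (min_sm X Y) W = min_sm (mult_sm X W) (mult_sm Y W)"
proof -
  obtain r s t where r: "r \<in> E_sm" "X = cls_sm r" and s: "s \<in> E_sm" "Y = cls_sm s"
    and t: "t \<in> E_sm" "W = cls_sm t"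
    using assms(1-3) by (meson Rsm_cases)
  obtain n where n: "n \<in> N_sm" and nonneg: "\<forall>e\<in>I_set. 0 \<le> t e + n e"
    using assms(4) t by (auto simp: le_sm_cls_iff E_sm_const)
  have t'_E: "(\<lambda>e. t e + n e) \<in> E_sm"
    using t(1) n N_sm_subset_E_sm by (auto intro: E_sm_add)
  then have W: "W = cls_sm (\<lambda>e. t e + n e)"
    using t n by (simp add: cls_sm_eq_iff N_sm_uminus)
  have "mult_sm (min_sm X Y) W = cls_sm (\<lambda>e. smooth_min r s e * (t e + n e))"
    using r s t'_E by (simp add: W min_sm_cls mult_sm_cls E_sm_smooth_min_max)
  also have "\<dots> = min_sm (cls_sm (\<lambda>e. r e * (t e + n e))) (cls_sm (\<lambda>e. s e * (t e + n e)))"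
    using r s t'_E nonneg by (simp add: min_sm_mult_nonneg_cls)
  also have "\<dots> = min_sm (mult_sm X W) (mult_sm Y W)"
    using r s t'_E by (simp add: W mult_sm_cls)
  finally show ?thesis .
qed

theorem proposition4p15:
  shows "f_ring Rsm_ring le_sm min_sm max_sm"
  unfolding f_ring_def l_ring_def Rsm_ring_simps
  using ring_Rsm_ring le_sm_refl le_sm_antisym le_sm_trans le_sm_add_right le_sm_mult_nonneg
    min_sm_inf max_sm_sup min_sm_mult_nonneg
  by meson

end
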